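(* Under the standing assumptions below, let $\lambda=(\lambda_n)\in c_H$ and suppose the sequence $k(\lambda)=(k_n(\lambda))$ is well defined (all infinite products converge) and belongs to $X^*$, i.e., $x\mapsto\sum_{n=1}^\infty k_n(\lambda)x_n$ is a well-defined bounded linear functional on $X$. Then, with $T_{k(\lambda)}=A+b\,k(\lambda)$, $$\Sigma(T_{k(\lambda)})=\{\lambda_n\mid n\in\mathbb{N}_0\},\qquad\text{where }\lambda_0:=0.$$
   Context: $X$ is one of $\ell^p$ ($1\le p\le\infty$), $c$, $c_0$ (complex sequences; $c,c_0$ with the sup norm). Standing assumptions: $a=(a_n)$ is a strictly decreasing sequence of positive reals with $a_n\to0$; $b=(b_n)\in X$ with $b_n\neq0$ for all $n$. $A:X\to X$ is $(x_n)\mapsto(a_nx_n)$, and for a functional $k$, $T_k:=A+bk$, $x\mapsto Ax+(kx)b$. $H:=\{z\in\mathbb{C}\mid\operatorname{re} z\le 0\}$ and $c_H:=\{(\lambda_n)\in c_0\mid \lambda_n\in H\ \forall n\}$. For $\lambda\in c_H$, $$k_n(\lambda):=-\frac{a_n-\lambda_n}{b_n}\prod_{m\ge1,\,m\neq n}\frac{1-\lambda_m/a_n}{1-a_m/a_n},\quad n\in\mathbb{N}.$$ $\mathbb{N}_0=\{0,1,2,\dots\}$. *)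

theory Defs
  imports "HOL-Analysis.Analysis"
begin

text \<open>The sequence space X: Lp p (1 \<le> p < \<infinity>), Linf (= l^\<infinity>), Conv (= c), Conv0 (= c_0).
  Sequences are indexed by nat starting at 0 (index n corresponds to the paper's n+1).\<close>
datatype seqspace = Lp real | Linf | Conv | Conv0

definition valid_space :: "seqspace \<Rightarrow> bool" where
  "valid_space X = (case X of Lp p \<Rightarrow> 1 \<le> p | _ \<Rightarrow> True)"

definition inX :: "seqspace \<Rightarrow> (nat \<Rightarrow> complex) \<Rightarrow> bool" where
  "inX X x = (case X of
      Lp p \<Rightarrow> summable (\<lambda>n. norm (x n) powr p)
    | Linf \<Rightarrow> bounded (range x)
    | Conv \<Rightarrow> convergent x
    | Conv0 \<Rightarrow> x \<longlonglongrightarrow> 0)"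

definition normX :: "seqspace \<Rightarrow> (nat \<Rightarrow> complex) \<Rightarrow> real" where
  "normX X x = (case X of
      Lp p \<Rightarrow> (\<Sum>n. norm (x n) powr p) powr (1 / p)
    | _ \<Rightarrow> (SUP n. norm (x n)))"

definition bounded_opX :: "seqspace \<Rightarrow> ((nat \<Rightarrow> complex) \<Rightarrow> (nat \<Rightarrow> complex)) \<Rightarrow> bool" where
  "bounded_opX X T =
     ((\<forall>x. inX X x \<longrightarrow> inX X (T x)) \<and>
      (\<forall>x y. inX X x \<longrightarrow> inX X y \<longrightarrow> T (\<lambda>n. x n + y n) = (\<lambda>n. T x n + T y n)) \<and>
      (\<forall>c x. inX X x \<longrightarrow> T (\<lambda>n. c * x n) = (\<lambda>n. c * T x n)) \<and>
      (\<exists>K. \<forall>x. inX X x \<longrightarrow> normX X (T x) \<le> K * normX X x))"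

definition spectrumX :: "seqspace \<Rightarrow> ((nat \<Rightarrow> complex) \<Rightarrow> (nat \<Rightarrow> complex)) \<Rightarrow> complex set" where
  "spectrumX X T = {\<mu>. \<not> (\<exists>S. bounded_opX X S \<and>
      (\<forall>x. inX X x \<longrightarrow> S (\<lambda>n. T x n - \<mu> * x n) = x \<and> (\<lambda>n. T (S x) n - \<mu> * S x n) = x))}"

definition in_dualX :: "seqspace \<Rightarrow> (nat \<Rightarrow> complex) \<Rightarrow> bool" where
  "in_dualX X k = ((\<forall>x. inX X x \<longrightarrow> summable (\<lambda>n. k n * x n)) \<and>
      (\<exists>K. \<forall>x. inX X x \<longrightarrow> norm (\<Sum>n. k n * x n) \<le> K * normX X x))"

definition Top :: "(nat \<Rightarrow> real) \<Rightarrow> (nat \<Rightarrow> complex) \<Rightarrow> (nat \<Rightarrow> complex)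
                   \<Rightarrow> (nat \<Rightarrow> complex) \<Rightarrow> (nat \<Rightarrow> complex)" where
  "Top a b k x = (\<lambda>n. complex_of_real (a n) * x n + (\<Sum>m. k m * x m) * b n)"

definition kfac :: "(nat \<Rightarrow> real) \<Rightarrow> (nat \<Rightarrow> complex) \<Rightarrow> nat \<Rightarrow> nat \<Rightarrow> complex" where
  "kfac a lam n m = (if m = n then 1 else
      (1 - lam m / complex_of_real (a n)) / (1 - complex_of_real (a m / a n)))"

definition kseq :: "(nat \<Rightarrow> real) \<Rightarrow> (nat \<Rightarrow> complex) \<Rightarrow> (nat \<Rightarrow> complex) \<Rightarrow> nat \<Rightarrow> complex" where
  "kseq a b lam n = - ((complex_of_real (a n) - lam n) / b n) * (\<Prod>m. kfac a lam n m)"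

end

theory Submission
  imports Defs
begin

text \<open>
  Writing \<open>T - \<mu> = (A - \<mu>)(I + (A - \<mu>)\<^sup>-\<^sup>1 b k)\<close>, a point \<open>\<mu> \<notin> {0} \<union> {a\<^sub>n}\<close> lies in the
  spectrum iff the scalar \<open>1 + k((A - \<mu>)\<^sup>-\<^sup>1 b) = 1 + \<Sum>\<^sub>n k\<^sub>n b\<^sub>n / (a\<^sub>n - \<mu>)\<close> vanishes;
  otherwise the Sherman--Morrison formula inverts \<open>T - \<mu>\<close>. The coefficients \<open>k(\<lambda>)\<close> are
  chosen so that \<open>-k\<^sub>n b\<^sub>n\<close> is the limit of the residues at \<open>a\<^sub>n\<close> of the finite products
  \<open>\<Prod>\<^sub>m\<^sub><\<^sub>N (\<mu> - \<lambda>\<^sub>m)/(\<mu> - a\<^sub>m)\<close>. These residues are dominated by \<open>|k\<^sub>n b\<^sub>n|\<close>, which is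
  summable because \<open>k \<in> X\<^sup>*\<close> and \<open>b \<in> X\<close>, so passing to the limit in the partial fraction
  expansions identifies the scalar with \<open>\<Prod>\<^sub>m (\<mu> - \<lambda>\<^sub>m)/(\<mu> - a\<^sub>m)\<close>. This product vanishes at
  every \<open>\<lambda>\<^sub>j\<close> and, by comparison with the convergent product defining \<open>k\<^sub>1\<close>, converges to a
  nonzero value at every other \<open>\<mu>\<close>. The points \<open>a\<^sub>j\<close> are resolvent points by an explicit
  inverse, and \<open>0\<close> is in the spectrum since \<open>T\<close> is a compact operator on an infinite-dimensional space.
\<close>

section \<open>Sequence spaces\<close>

lemma powr_le_sum2:
  fixes s t u p :: real
  assumes "0 \<le> s" "0 \<le> t" "0 \<le> u" "u \<le> s + t" "0 < p"
  shows "u powr p \<le> 2 powr p * (s powr p + t powr p)"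
proof -
  have "u powr p \<le> (2 * max s t) powr p"
    using assms by (intro powr_mono2) auto
  also have "\<dots> = 2 powr p * max s t powr p"
    using assms by (simp add: powr_mult)
  also have "max s t powr p \<le> s powr p + t powr p"
    by (auto simp: max_def)
  finally show ?thesis by simp
qed

lemma valid_space_Lp: "valid_space (Lp p) \<Longrightarrow> 1 \<le> p"
  by (simp add: valid_space_def)

lemma inX_finite_support:
  assumes "valid_space X" and "\<And>n. n \<ge> N \<Longrightarrow> x n = 0"
  shows "inX X x"
proof -
  have lim: "x \<longlonglongrightarrow> 0"
    using assms(2) by (intro tendsto_eventually) (auto simp: eventually_sequentially)
  show ?thesis
  proof (cases X)
    case (Lp p)
    have "summable (\<lambda>n. norm (x n) powr p)"
      by (rule summable_finite[of "{..<N}"])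
         (use assms valid_space_Lp[of p] Lp in \<open>auto simp: not_less\<close>)
    then show ?thesis using Lp by (simp add: inX_def)
  next
    case Linf
    have "bounded (range x)"
      using lim by (metis Bseq_eq_bounded convergentI convergent_imp_Bseq)
    then show ?thesis using Linf by (simp add: inX_def)
  qed (use lim in \<open>auto simp: inX_def convergent_def\<close>)
qed

lemma inX_add:
  assumes "valid_space X" "inX X x" "inX X y"
  shows "inX X (\<lambda>n. x n + y n)"
proof (cases X)
  case (Lp p)
  then have p: "p > 0" using assms valid_space_Lp by force
  have "summable (\<lambda>n. 2 powr p * (norm (x n) powr p + norm (y n) powr p))"
    using assms Lp p by (auto simp: inX_def intro!: summable_mult summable_add)
  then have "summable (\<lambda>n. norm (x n + y n) powr p)"
    by (rule summable_comparison_test[rotated], intro exI[of _ 0] allI impI)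
       (use p powr_le_sum2[of "norm (x _)" "norm (y _)" "norm (x _ + y _)" p] in
        \<open>simp add: norm_triangle_ineq\<close>)
  then show ?thesis using Lp by (simp add: inX_def)
next
  case Linf
  then obtain B C where "\<And>n. norm (x n) \<le> B" "\<And>n. norm (y n) \<le> C"
    using assms by (auto simp: inX_def bounded_iff)
  then have "\<And>n. norm (x n + y n) \<le> B + C"
    by (meson add_mono norm_triangle_ineq order_trans)
  then show ?thesis using Linf by (auto simp: inX_def bounded_iff)
qed (use assms in \<open>auto simp: inX_def intro: convergent_add tendsto_add_zero\<close>)

lemma convergent_norm_bound:
  fixes d :: "nat \<Rightarrow> 'a::real_normed_vector"
  assumes "convergent d"
  obtains B where "0 \<le> B" "\<And>n. norm (d n) \<le> B"
  using assms by (metis Bseq_def convergent_imp_Bseq less_eq_real_def)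

lemma inX_mult_convergent:
  assumes "valid_space X" "convergent d" "inX X x"
  shows "inX X (\<lambda>n. d n * x n)"
proof -
  obtain B where B0: "0 \<le> B" and B: "\<And>n. norm (d n) \<le> B"
    using convergent_norm_bound[OF assms(2)] by blast
  show ?thesis
  proof (cases X)
    case (Lp p)
    then have p: "p > 0" using assms valid_space_Lp by force
    have "summable (\<lambda>n. B powr p * norm (x n) powr p)"
      using assms Lp by (auto simp: inX_def intro!: summable_mult)
    then have "summable (\<lambda>n. norm (d n * x n) powr p)"
    proof (rule summable_comparison_test[rotated], intro exI[of _ 0] allI impI)
      fix n
      have "norm (d n * x n) powr p \<le> (B * norm (x n)) powr p"
        using p B[of n] by (intro powr_mono2) (auto simp: norm_mult mult_right_mono)
      then show "norm (norm (d n * x n) powr p) \<le> B powr p * norm (x n) powr p"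
        using B0 by (simp add: powr_mult)
    qed
    then show ?thesis using Lp by (simp add: inX_def)
  next
    case Linf
    then obtain C where "\<And>n. norm (x n) \<le> C" using assms by (auto simp: inX_def bounded_iff)
    then have "\<And>n. norm (d n * x n) \<le> B * C"
      using B B0 by (simp add: norm_mult mult_mono)
    then show ?thesis using Linf by (auto simp: inX_def bounded_iff)
  next
    case Conv0
    obtain L where "d \<longlonglongrightarrow> L" using assms(2) by (auto simp: convergent_def)
    then have "(\<lambda>n. d n * x n) \<longlonglongrightarrow> L * 0"
      using assms Conv0 by (intro tendsto_mult) (auto simp: inX_def)
    then show ?thesis using Conv0 by (simp add: inX_def)
  qed (use assms in \<open>auto simp: inX_def intro: convergent_mult\<close>)
qed

lemma inX_cmult: "valid_space X \<Longrightarrow> inX X x \<Longrightarrow> inX X (\<lambda>n. c * x n)"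
  using inX_mult_convergent[of X "\<lambda>_. c"] by (simp add: convergent_const)

lemma inX_imp_bounded:
  assumes "inX X x" "\<And>p. X \<noteq> Lp p"
  shows "bounded (range x)"
proof (cases X)
  case Conv then have "convergent x" using assms by (simp add: inX_def)
  then show ?thesis by (metis Bseq_eq_bounded convergent_imp_Bseq)
next
  case Conv0 then have "convergent x" using assms by (auto simp: inX_def convergent_def)
  then show ?thesis by (metis Bseq_eq_bounded convergent_imp_Bseq)
qed (use assms in \<open>auto simp: inX_def\<close>)

lemma norm_le_normX:
  assumes "valid_space X" "inX X x"
  shows "norm (x m) \<le> normX X x"
proof (cases "\<exists>p. X = Lp p")
  case True
  then obtain p where Lp: "X = Lp p" by blast
  then have p: "p > 0" using assms valid_space_Lp by force
  have "norm (x m) powr p \<le> (\<Sum>n. norm (x n) powr p)"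
    using assms Lp sum_le_suminf[of "\<lambda>n. norm (x n) powr p" "{m}"] by (simp add: inX_def)
  then have "(norm (x m) powr p) powr (1/p) \<le> (\<Sum>n. norm (x n) powr p) powr (1/p)"
    using p by (intro powr_mono2) auto
  then show ?thesis using Lp p by (simp add: powr_powr normX_def)
next
  case False
  then obtain B where "\<And>n. norm (x n) \<le> B"
    using inX_imp_bounded[OF assms(2)] by (auto simp: bounded_iff)
  then have "norm (x m) \<le> (SUP n. norm (x n))"
    by (intro cSUP_upper bdd_aboveI[where M=B]) auto
  moreover have "normX X x = (SUP n. norm (x n))"
    using False by (cases X) (auto simp: normX_def)
  ultimately show ?thesis by simp
qed

lemma normX_nonneg: "valid_space X \<Longrightarrow> inX X x \<Longrightarrow> 0 \<le> normX X x"
  using norm_le_normX[of X x 0] norm_ge_zero order_trans by blast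

definition unit_vec :: "nat \<Rightarrow> nat \<Rightarrow> complex" where
  "unit_vec j n = (if n = j then 1 else 0)"

lemma inX_unit_vec: "valid_space X \<Longrightarrow> inX X (unit_vec j)"
  by (rule inX_finite_support[of X "Suc j"]) (auto simp: unit_vec_def)

lemma normX_unit_vec_le: 
  assumes "valid_space X" shows "normX X (unit_vec j) \<le> 1"
proof (cases X)
  case (Lp p)
  have "(\<Sum>n. norm (unit_vec j n) powr p) = (\<Sum>n\<in>{j}. norm (unit_vec j n) powr p)"
    by (rule suminf_finite) (auto simp: unit_vec_def)
  then show ?thesis using Lp assms valid_space_Lp[of p] by (simp add: normX_def unit_vec_def)
qed (auto simp: normX_def unit_vec_def intro!: cSUP_least)

text \<open>A crude substitute for Minkowski's inequality, uniform over all the sequence norms.\<close>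
lemma normX_dominated:
  assumes X: "valid_space X" and y: "inX X y" and w: "inX X w" and z: "inX X z"
    and C: "0 \<le> C" and D: "0 \<le> D"
    and le: "\<And>n. norm (z n) \<le> C * norm (y n) + D * norm (w n)"
  shows "normX X z \<le> 4 * (C * normX X y + D * normX X w)"
proof -
  define S where "S = C * normX X y + D * normX X w"
  have S0: "0 \<le> S" unfolding S_def using C D y w X normX_nonneg by auto
  show ?thesis
  proof (cases "\<exists>p. X = Lp p")
    case True
    then obtain p where Lp: "X = Lp p" by auto
    then have p: "p > 0" "1 \<le> p" using X valid_space_Lp by force+
    have sy: "summable (\<lambda>n. norm (y n) powr p)" using y Lp by (simp add: inX_def)
    have sw: "summable (\<lambda>n. norm (w n) powr p)" using w Lp by (simp add: inX_def)
    have sz: "summable (\<lambda>n. norm (z n) powr p)" using z Lp by (simp add: inX_def)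
    have norm_powr: "normX X x powr p = (\<Sum>n. norm (x n) powr p)" if "inX X x" for x
      using that Lp p by (simp add: normX_def inX_def powr_powr suminf_nonneg)
    have "(\<Sum>n. norm (z n) powr p)
        \<le> (\<Sum>n. 2 powr p * (C powr p * norm (y n) powr p + D powr p * norm (w n) powr p))"
      using powr_le_sum2[OF _ _ _ le p(1)] C D
      by (intro suminf_le sz summable_mult summable_add sy sw) (simp add: powr_mult)
    also have "\<dots> = 2 powr p * ((C * normX X y) powr p + (D * normX X w) powr p)"
      using C D sums_mult[OF sums_add[OF sums_mult[OF summable_sums[OF sy]] sums_mult[OF summable_sums[OF sw]]]]
      by (simp add: sums_iff powr_mult norm_powr y w)
    also have "\<dots> \<le> 2 powr p * (S powr p + S powr p)"
      unfolding S_def using C D y w X normX_nonneg p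
      by (intro mult_left_mono add_mono powr_mono2) auto
    finally have sum_le: "(\<Sum>n. norm (z n) powr p) \<le> 2 * 2 powr p * S powr p" by simp
    have "normX X z \<le> (2 * 2 powr p * S powr p) powr (1/p)"
      using Lp p sz sum_le by (simp add: normX_def powr_mono2 suminf_nonneg)
    also have "\<dots> = 2 powr (1/p) * 2 * S"
      using p S0 by (simp add: powr_mult powr_powr)
    also have "\<dots> \<le> 2 * 2 * S"
      using p S0 by (intro mult_right_mono) (auto intro: order_trans[OF powr_mono[of "1/p" 1]])
    finally show ?thesis unfolding S_def by simp
  next
    case False
    have "norm (z n) \<le> S" for n
      using le[of n] mult_left_mono[OF norm_le_normX[OF X y, of n] C]
        mult_left_mono[OF norm_le_normX[OF X w, of n] D] unfolding S_def by linarith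
    then have "normX X z \<le> S"
      using False by (cases X) (auto simp: normX_def intro!: cSUP_least)
    then show ?thesis using S0 unfolding S_def[symmetric] by linarith
  qed
qed

section \<open>Bounded functionals and operators\<close>

definition bounded_functionalX :: "seqspace \<Rightarrow> ((nat \<Rightarrow> complex) \<Rightarrow> complex) \<Rightarrow> bool" where
  "bounded_functionalX X \<phi> =
     ((\<forall>x y. inX X x \<longrightarrow> inX X y \<longrightarrow> \<phi> (\<lambda>n. x n + y n) = \<phi> x + \<phi> y) \<and>
      (\<forall>c x. inX X x \<longrightarrow> \<phi> (\<lambda>n. c * x n) = c * \<phi> x) \<and>
      (\<exists>K. \<forall>x. inX X x \<longrightarrow> norm (\<phi> x) \<le> K * normX X x))"

lemma bounded_functionalXI:
  assumes "\<And>x y. inX X x \<Longrightarrow> inX X y \<Longrightarrow> \<phi> (\<lambda>n. x n + y n) = \<phi> x + \<phi> y"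
    and "\<And>c x. inX X x \<Longrightarrow> \<phi> (\<lambda>n. c * x n) = c * \<phi> x"
    and "\<And>x. inX X x \<Longrightarrow> norm (\<phi> x) \<le> K * normX X x"
  shows "bounded_functionalX X \<phi>"
  unfolding bounded_functionalX_def using assms by blast

lemma bounded_functionalXD:
  assumes "bounded_functionalX X \<phi>" "inX X x" "inX X y"
  shows "\<phi> (\<lambda>n. x n + y n) = \<phi> x + \<phi> y" "\<phi> (\<lambda>n. c * x n) = c * \<phi> x"
  using assms unfolding bounded_functionalX_def by blast+

lemma bounded_functionalX_bound:
  assumes "valid_space X" "bounded_functionalX X \<phi>"
  obtains K where "0 \<le> K" "\<And>x. inX X x \<Longrightarrow> norm (\<phi> x) \<le> K * normX X x"
proof -
  obtain K where K: "\<And>x. inX X x \<Longrightarrow> norm (\<phi> x) \<le> K * normX X x"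
    using assms(2) by (auto simp: bounded_functionalX_def)
  have "K * normX X x \<le> max K 0 * normX X x" if "inX X x" for x
    using normX_nonneg[OF assms(1) that] by (intro mult_right_mono) auto
  then show ?thesis using that[of "max K 0"] K by force
qed

lemma bounded_functionalX_add:
  assumes X: "valid_space X" and \<phi>: "bounded_functionalX X \<phi>" and \<psi>: "bounded_functionalX X \<psi>"
  shows "bounded_functionalX X (\<lambda>x. \<phi> x + \<psi> x)"
proof -
  obtain K where K: "\<And>x. inX X x \<Longrightarrow> norm (\<phi> x) \<le> K * normX X x"
    using bounded_functionalX_bound[OF X \<phi>] by blast
  obtain L where L: "\<And>x. inX X x \<Longrightarrow> norm (\<psi> x) \<le> L * normX X x"
    using bounded_functionalX_bound[OF X \<psi>] by blast
  show ?thesis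
  proof (rule bounded_functionalXI)
    show "norm (\<phi> x + \<psi> x) \<le> (K + L) * normX X x" if "inX X x" for x
      using norm_triangle_ineq[of "\<phi> x" "\<psi> x"] K[OF that] L[OF that] by (simp add: distrib_right)
  qed (simp_all add: bounded_functionalXD[OF \<phi>] bounded_functionalXD[OF \<psi>] algebra_simps)
qed

lemma bounded_functionalX_cmult:
  assumes X: "valid_space X" and \<phi>: "bounded_functionalX X \<phi>"
  shows "bounded_functionalX X (\<lambda>x. c * \<phi> x)"
proof -
  obtain K where K: "\<And>x. inX X x \<Longrightarrow> norm (\<phi> x) \<le> K * normX X x"
    using bounded_functionalX_bound[OF X \<phi>] by blast
  show ?thesis
  proof (rule bounded_functionalXI)
    show "norm (c * \<phi> x) \<le> (norm c * K) * normX X x" if "inX X x" for x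
      using K[OF that] by (simp add: norm_mult mult.assoc mult_left_mono)
  qed (simp_all add: bounded_functionalXD[OF \<phi>] algebra_simps)
qed

lemma bounded_functionalX_coordinate:
  "valid_space X \<Longrightarrow> bounded_functionalX X (\<lambda>x. x j)"
  by (rule bounded_functionalXI[where K=1]) (simp_all add: norm_le_normX)

lemma bounded_functionalX_mult_convergent:
  assumes X: "valid_space X" and d: "convergent d" and \<phi>: "bounded_functionalX X \<phi>"
  shows "bounded_functionalX X (\<lambda>x. \<phi> (\<lambda>n. d n * x n))"
proof -
  obtain B where B0: "0 \<le> B" and B: "\<And>n. norm (d n) \<le> B"
    using convergent_norm_bound[OF d] by blast
  obtain K where K0: "0 \<le> K" and K: "\<And>x. inX X x \<Longrightarrow> norm (\<phi> x) \<le> K * normX X x"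
    using bounded_functionalX_bound[OF X \<phi>] by blast
  have dx: "inX X (\<lambda>n. d n * x n)" if "inX X x" for x
    using inX_mult_convergent[OF X d that] .
  show ?thesis
  proof (rule bounded_functionalXI)
    show "norm (\<phi> (\<lambda>n. d n * x n)) \<le> (K * (4 * B)) * normX X x" if x: "inX X x" for x
    proof -
      have "normX X (\<lambda>n. d n * x n) \<le> 4 * (B * normX X x + 0 * normX X x)"
        using B by (intro normX_dominated[OF X x x dx[OF x] B0]) (auto simp: norm_mult mult_right_mono)
      then show ?thesis
        using K[OF dx[OF x]] K0 by (simp add: mult.assoc order_trans mult_left_mono)
    qed
    show "\<phi> (\<lambda>n. d n * (x n + y n)) = \<phi> (\<lambda>n. d n * x n) + \<phi> (\<lambda>n. d n * y n)"
      if "inX X x" "inX X y" for x y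
      using bounded_functionalXD(1)[OF \<phi> dx[OF that(1)] dx[OF that(2)]] by (simp add: distrib_left)
    show "\<phi> (\<lambda>n. d n * (c * x n)) = c * \<phi> (\<lambda>n. d n * x n)" if "inX X x" for c x
      using bounded_functionalXD(2)[OF \<phi> dx[OF that] dx[OF that]] by (simp add: mult.left_commute)
  qed
qed

lemma bounded_functionalX_dual:
  assumes "in_dualX X k"
  shows "bounded_functionalX X (\<lambda>x. \<Sum>n. k n * x n)"
proof -
  have s: "summable (\<lambda>n. k n * x n)" if "inX X x" for x
    using assms that by (simp add: in_dualX_def)
  obtain K where "\<And>x. inX X x \<Longrightarrow> norm (\<Sum>n. k n * x n) \<le> K * normX X x"
    using assms by (auto simp: in_dualX_def)
  then show ?thesis
  proof (rule bounded_functionalXI[rotated 2])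
    show "(\<Sum>n. k n * (x n + y n)) = (\<Sum>n. k n * x n) + (\<Sum>n. k n * y n)"
      if "inX X x" "inX X y" for x y
      using suminf_add[OF s[OF that(1)] s[OF that(2)]] by (simp add: distrib_left)
    show "(\<Sum>n. k n * (c * x n)) = c * (\<Sum>n. k n * x n)" if "inX X x" for c x
      using suminf_mult[OF s[OF that], of c] by (simp add: mult.left_commute)
  qed
qed

lemma bounded_opXI:
  assumes "\<And>x. inX X x \<Longrightarrow> inX X (S x)"
    and "\<And>x y. inX X x \<Longrightarrow> inX X y \<Longrightarrow> S (\<lambda>n. x n + y n) = (\<lambda>n. S x n + S y n)"
    and "\<And>c x. inX X x \<Longrightarrow> S (\<lambda>n. c * x n) = (\<lambda>n. c * S x n)"
    and "\<And>x. inX X x \<Longrightarrow> normX X (S x) \<le> K * normX X x"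
  shows "bounded_opX X S"
  unfolding bounded_opX_def using assms by blast

lemma bounded_opXD:
  assumes "bounded_opX X S" "inX X x" "inX X y"
  shows "inX X (S x)" "S (\<lambda>n. x n + y n) = (\<lambda>n. S x n + S y n)" "S (\<lambda>n. c * x n) = (\<lambda>n. c * S x n)"
  using assms unfolding bounded_opX_def by blast+

lemma bounded_opX_bound:
  assumes "valid_space X" "bounded_opX X S"
  obtains K where "0 \<le> K" "\<And>x. inX X x \<Longrightarrow> normX X (S x) \<le> K * normX X x"
proof -
  obtain K where K: "\<And>x. inX X x \<Longrightarrow> normX X (S x) \<le> K * normX X x"
    using assms(2) by (auto simp: bounded_opX_def)
  have "K * normX X x \<le> max K 0 * normX X x" if "inX X x" for x
    using normX_nonneg[OF assms(1) that] by (intro mult_right_mono) auto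
  then show ?thesis using that[of "max K 0"] K by force
qed

lemma bounded_opX_add:
  assumes X: "valid_space X" and S: "bounded_opX X S" and T: "bounded_opX X T"
  shows "bounded_opX X (\<lambda>x n. S x n + T x n)"
proof -
  obtain K where K: "\<And>x. inX X x \<Longrightarrow> normX X (S x) \<le> K * normX X x"
    using bounded_opX_bound[OF X S] by blast
  obtain L where L: "\<And>x. inX X x \<Longrightarrow> normX X (T x) \<le> L * normX X x"
    using bounded_opX_bound[OF X T] by blast
  note SX = bounded_opXD(1)[OF S _ _] and TX = bounded_opXD(1)[OF T _ _]
  show ?thesis
  proof (rule bounded_opXI)
    show "normX X (\<lambda>n. S x n + T x n) \<le> (4 * (K + L)) * normX X x" if x: "inX X x" for x
    proof -
      have "normX X (\<lambda>n. S x n + T x n) \<le> 4 * (1 * normX X (S x) + 1 * normX X (T x))"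
        by (rule normX_dominated[OF X SX[OF x x] TX[OF x x] inX_add[OF X SX[OF x x] TX[OF x x]]])
           (auto simp: norm_triangle_ineq)
      then show ?thesis using K[OF x] L[OF x] by (simp add: algebra_simps)
    qed
  qed (simp_all add: inX_add[OF X] SX TX bounded_opXD[OF S] bounded_opXD[OF T] algebra_simps)
qed

lemma bounded_opX_diagonal:
  assumes X: "valid_space X" and d: "convergent d"
  shows "bounded_opX X (\<lambda>x n. d n * x n)"
proof -
  obtain B where B0: "0 \<le> B" and B: "\<And>n. norm (d n) \<le> B"
    using convergent_norm_bound[OF d] by blast
  show ?thesis
  proof (rule bounded_opXI)
    show "normX X (\<lambda>n. d n * x n) \<le> (4 * B) * normX X x" if x: "inX X x" for x
      using normX_dominated[OF X x x inX_mult_convergent[OF X d x] B0 order_refl] B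
      by (simp add: norm_mult mult_right_mono)
  qed (simp_all add: inX_mult_convergent[OF X d] distrib_left mult.left_commute)
qed

lemma bounded_opX_rank_one:
  assumes X: "valid_space X" and \<phi>: "bounded_functionalX X \<phi>" and w: "inX X w"
  shows "bounded_opX X (\<lambda>x n. \<phi> x * w n)"
proof -
  obtain K where K: "\<And>x. inX X x \<Longrightarrow> norm (\<phi> x) \<le> K * normX X x"
    using bounded_functionalX_bound[OF X \<phi>] by blast
  show ?thesis
  proof (rule bounded_opXI)
    show "normX X (\<lambda>n. \<phi> x * w n) \<le> (4 * K * normX X w) * normX X x" if x: "inX X x" for x
    proof -
      have "normX X (\<lambda>n. \<phi> x * w n) \<le> 4 * (norm (\<phi> x) * normX X w + 0 * normX X w)"
        by (rule normX_dominated[OF X w w inX_cmult[OF X w]]) (auto simp: norm_mult)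
      also have "\<dots> \<le> 4 * ((K * normX X x) * normX X w)"
        using K[OF x] normX_nonneg[OF X w] by (simp add: mult_right_mono)
      finally show ?thesis by (simp add: mult_ac)
    qed
  qed (simp_all add: inX_cmult[OF X w] bounded_functionalXD[OF \<phi>] algebra_simps)
qed

section \<open>Partial fractions and infinite products\<close>

definition ratio_prod :: "(nat \<Rightarrow> 'a::field) \<Rightarrow> (nat \<Rightarrow> 'a) \<Rightarrow> nat set \<Rightarrow> 'a \<Rightarrow> 'a" where
  "ratio_prod \<alpha> \<beta> S \<mu> = (\<Prod>m\<in>S. (\<mu> - \<beta> m) / (\<mu> - \<alpha> m))"

definition residue_coeff :: "(nat \<Rightarrow> 'a::field) \<Rightarrow> (nat \<Rightarrow> 'a) \<Rightarrow> nat set \<Rightarrow> nat \<Rightarrow> 'a" where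
  "residue_coeff \<alpha> \<beta> S n = (\<alpha> n - \<beta> n) * (\<Prod>m\<in>S-{n}. (\<alpha> n - \<beta> m) / (\<alpha> n - \<alpha> m))"

lemma partial_fraction_two_poles:
  fixes \<mu> p q r :: "'a::field"
  assumes "\<mu> \<noteq> p" "\<mu> \<noteq> q" "p \<noteq> q"
  shows "(\<mu> - r) / ((\<mu> - p) * (\<mu> - q)) = ((p - r) / (p - q)) / (\<mu> - p) + ((q - r) / (q - p)) / (\<mu> - q)"
proof -
  have nz: "\<mu> - p \<noteq> 0" "\<mu> - q \<noteq> 0" "p - q \<noteq> 0" "q - p \<noteq> 0" using assms by auto
  have "((p - r) / (p - q)) / (\<mu> - p) + ((q - r) / (q - p)) / (\<mu> - q)
     = ((p - r) * (\<mu> - q) - (q - r) * (\<mu> - p)) / ((p - q) * ((\<mu> - p) * (\<mu> - q)))"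
    using nz by (simp add: divide_simps) (simp add: algebra_simps)
  also have "(p - r) * (\<mu> - q) - (q - r) * (\<mu> - p) = (p - q) * (\<mu> - r)"
    by (simp add: algebra_simps)
  finally show ?thesis using nz by simp
qed

lemma partial_fraction_expansion:
  assumes "finite S" "inj_on \<alpha> S" "\<forall>m\<in>S. \<mu> \<noteq> \<alpha> m"
  shows "ratio_prod \<alpha> \<beta> S \<mu> = 1 + (\<Sum>n\<in>S. residue_coeff \<alpha> \<beta> S n / (\<mu> - \<alpha> n))"
  using assms
proof (induction S arbitrary: \<mu> rule: finite_induct)
  case empty
  then show ?case by (simp add: ratio_prod_def)
next
  case (insert j S)
  let ?R = "ratio_prod \<alpha> \<beta>" and ?C = "residue_coeff \<alpha> \<beta>"
  have inj: "inj_on \<alpha> S" and ajS: "\<forall>m\<in>S. \<alpha> j \<noteq> \<alpha> m" using insert by (auto simp: inj_on_def)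
  have mu: "\<forall>m\<in>S. \<mu> \<noteq> \<alpha> m" "\<mu> \<noteq> \<alpha> j" using insert by auto
  have IH_mu: "?R S \<mu> = 1 + (\<Sum>n\<in>S. ?C S n / (\<mu> - \<alpha> n))" using insert inj mu by blast
  have IH_j: "?R S (\<alpha> j) = 1 + (\<Sum>n\<in>S. ?C S n / (\<alpha> j - \<alpha> n))" using insert inj ajS by blast
  have C_old: "?C (insert j S) n = ?C S n * ((\<alpha> n - \<beta> j) / (\<alpha> n - \<alpha> j))" if "n \<in> S" for n
  proof -
    have "insert j S - {n} = insert j (S - {n})" using that insert by auto
    then show ?thesis using insert that by (simp add: residue_coeff_def mult.assoc)
  qed
  have C_new: "?C (insert j S) j = (\<alpha> j - \<beta> j) * ?R S (\<alpha> j)"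
    using insert by (simp add: residue_coeff_def ratio_prod_def)
  have "?R (insert j S) \<mu> = (\<mu> - \<beta> j) / (\<mu> - \<alpha> j) +
      (\<Sum>n\<in>S. ?C S n * ((\<mu> - \<beta> j) / ((\<mu> - \<alpha> n) * (\<mu> - \<alpha> j))))"
    using insert IH_mu
    by (simp add: ratio_prod_def algebra_simps sum_distrib_left sum_divide_distrib)
  also have "\<dots> = (\<mu> - \<beta> j) / (\<mu> - \<alpha> j) +
      (\<Sum>n\<in>S. ?C S n * ((\<alpha> n - \<beta> j) / (\<alpha> n - \<alpha> j)) / (\<mu> - \<alpha> n)
             + ?C S n * ((\<alpha> j - \<beta> j) / (\<alpha> j - \<alpha> n)) / (\<mu> - \<alpha> j))"
    using mu ajS
    by (intro arg_cong2[where f="(+)"] sum.cong refl, subst partial_fraction_two_poles)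
       (auto simp: distrib_left)
  also have "\<dots> = 1 + (\<Sum>n\<in>S. ?C (insert j S) n / (\<mu> - \<alpha> n))
       + (\<alpha> j - \<beta> j) * (1 + (\<Sum>n\<in>S. ?C S n / (\<alpha> j - \<alpha> n))) / (\<mu> - \<alpha> j)"
  proof -
    have "(\<Sum>n\<in>S. ?C S n * ((\<alpha> j - \<beta> j) / (\<alpha> j - \<alpha> n)) / (\<mu> - \<alpha> j))
        = ((\<alpha> j - \<beta> j) * (\<Sum>n\<in>S. ?C S n / (\<alpha> j - \<alpha> n))) / (\<mu> - \<alpha> j)"
      by (simp add: sum_distrib_left sum_divide_distrib mult.commute)
    moreover have "(\<mu> - \<beta> j) / (\<mu> - \<alpha> j) = 1 + (\<alpha> j - \<beta> j) / (\<mu> - \<alpha> j)"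
      using mu by (simp add: field_simps)
    ultimately show ?thesis
      by (simp add: sum.distrib C_old add_divide_distrib distrib_left)
  qed
  also have "\<dots> = 1 + (\<Sum>n\<in>insert j S. ?C (insert j S) n / (\<mu> - \<alpha> n))"
    using insert by (simp add: C_new IH_j algebra_simps)
  finally show ?case .
qed

lemma norm_Ln_one_plus_minus_le:
  fixes z :: complex
  assumes "norm z \<le> 1/2"
  shows "norm (Ln (1 + z) - z) \<le> 2 * norm z ^ 2"
proof -
  have "norm (Ln (1 + z) - z) \<le> norm z ^ 2 / (1 - norm z)"
    by (rule Ln_approx_linear) (use assms in auto)
  also have "\<dots> \<le> norm z ^ 2 / (1/2)"
    using assms by (intro divide_left_mono) auto
  finally show ?thesis by simp
qed

lemma summable_Ln_one_plus_iff:
  fixes z :: "nat \<Rightarrow> complex"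
  assumes sq: "summable (\<lambda>m. norm (z m) ^ 2)"
  shows "summable (\<lambda>m. Ln (1 + z m)) \<longleftrightarrow> summable z"
proof -
  have "(\<lambda>m. norm (z m) ^ 2) \<longlonglongrightarrow> 0"
    using summable_LIMSEQ_zero[OF sq] .
  then have "eventually (\<lambda>m. norm (z m) ^ 2 < (1/2) ^ 2) sequentially"
    by (rule order_tendstoD) simp
  then have small: "eventually (\<lambda>m. norm (z m) \<le> 1/2) sequentially"
    by eventually_elim (use power_less_imp_less_base[of "norm (z _)" 2 "1/2"] in \<open>auto intro: less_imp_le\<close>)
  have "summable (\<lambda>m. Ln (1 + z m) - z m)"
    by (rule summable_comparison_test_ev[OF eventually_mono[OF small] summable_mult[OF sq, of 2]])
       (simp add: norm_Ln_one_plus_minus_le)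
  note diff = this
  show ?thesis
  proof
    assume "summable (\<lambda>m. Ln (1 + z m))"
    from summable_diff[OF this diff] show "summable z" by simp
  next
    assume "summable z"
    from summable_add[OF this diff] show "summable (\<lambda>m. Ln (1 + z m))" by simp
  qed
qed

lemma one_plus_neq_zero_if_Re_nonneg: "0 \<le> Re z \<Longrightarrow> 1 + z \<noteq> (0::complex)"
  by (auto simp: complex_eq_iff)

lemma summable_norm_sq_if_convergent_prod:
  fixes u :: "nat \<Rightarrow> complex"
  assumes prod: "convergent_prod (\<lambda>m. 1 + u m)" and Re: "\<And>m. 0 \<le> Re (u m)"
  shows "summable (\<lambda>m. norm (u m) ^ 2)"
proof -
  have nz: "1 + u m \<noteq> 0" for m
    using Re[of m] by (rule one_plus_neq_zero_if_Re_nonneg)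
  have "(\<lambda>m. (1 + u m) - 1) \<longlonglongrightarrow> 1 - 1"
    by (intro tendsto_diff convergent_prod_imp_LIMSEQ[OF prod] tendsto_const)
  then have "(\<lambda>m. norm (u m)) \<longlonglongrightarrow> 0"
    by (simp add: tendsto_norm_zero_iff)
  then have "eventually (\<lambda>m. norm (u m) < 1/2) sequentially"
    by (rule order_tendstoD) simp
  then have small: "eventually (\<lambda>m. norm (u m) \<le> 1/2) sequentially"
    by eventually_elim simp
  have "summable (\<lambda>m. 4 * Re (Ln (1 + u m)))"
    using summable_mult[OF summable_Re[OF summable_Ln_complex[OF prod nz]]] .
  moreover have "eventually (\<lambda>m. norm (norm (u m) ^ 2) \<le> 4 * Re (Ln (1 + u m))) sequentially"
    using small
  proof eventually_elim
    case (elim m)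
    define t where "t = norm (u m) ^ 2"
    have t: "0 \<le> t" "t \<le> 1/4"
      using power_mono[OF elim, of 2] unfolding t_def by (auto simp: power2_eq_square)
    have "1 + t \<le> (1 + Re (u m))^2 + (Im (u m))^2"
      using Re[of m] unfolding t_def cmod_power2 by (simp add: power2_eq_square algebra_simps)
    also have "\<dots> = norm (1 + u m)^2"
      by (simp add: cmod_power2)
    finally have "ln (1 + t) \<le> ln (norm (1 + u m)^2)"
      using t by (intro ln_mono) auto
    also have "\<dots> = 2 * ln (norm (1 + u m))"
      using nz[of m] by (simp add: ln_realpow)
    finally have "ln (1 + t) \<le> 2 * ln (norm (1 + u m))" .
    moreover have "t - t^2 \<le> ln (1 + t)"
      by (rule ln_one_plus_pos_lower_bound) (use t in auto)
    moreover have "t/2 \<le> t - t^2"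
      using mult_left_mono[OF t(2) t(1)] t(1) by (simp add: power2_eq_square)
    ultimately show ?case
      using nz[of m] unfolding t_def by (simp add: Re_Ln)
  qed
  ultimately show ?thesis
    by (rule summable_comparison_test_ev[rotated])
qed

lemma summable_if_convergent_prod:
  fixes u :: "nat \<Rightarrow> complex"
  assumes prod: "convergent_prod (\<lambda>m. 1 + u m)" and Re: "\<And>m. 0 \<le> Re (u m)"
  shows "summable u"
proof -
  have "1 + u m \<noteq> 0" for m
    using Re[of m] by (rule one_plus_neq_zero_if_Re_nonneg)
  then show ?thesis
    using summable_Ln_complex[OF prod] summable_Ln_one_plus_iff[OF summable_norm_sq_if_convergent_prod[OF assms]]
    by blast
qed

lemma convergent_prod_one_plus:
  fixes z :: "nat \<Rightarrow> complex"
  assumes "summable z" "summable (\<lambda>m. norm (z m) ^ 2)" "\<And>m. 1 + z m \<noteq> 0"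
  shows "convergent_prod (\<lambda>m. 1 + z m)"
  using assms convergent_prod_iff_summable_complex[of "\<lambda>m. 1 + z m"] summable_Ln_one_plus_iff
  by blast

section \<open>The rank-one perturbation\<close>

lemma in_spectrumX_if_eigenvector:
  assumes x: "inX X x" "x n \<noteq> 0" and eigen: "(\<lambda>m. T x m - \<mu> * x m) = (\<lambda>_. 0)"
  shows "\<mu> \<in> spectrumX X T"
proof (rule ccontr)
  assume "\<mu> \<notin> spectrumX X T"
  then obtain S where S: "bounded_opX X S" and "S (\<lambda>m. T x m - \<mu> * x m) = x"
    using x(1) unfolding spectrumX_def by blast
  then have "x = S (\<lambda>m. 0 * x m)"
    using eigen by simp
  also have "\<dots> = (\<lambda>m. 0 * S x m)"
    using bounded_opXD(3)[OF S x(1) x(1)] .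
  finally show False
    using x(2) by (metis mult_zero_left)
qed

locale rank_one_perturbation =
  fixes X :: seqspace and a :: "nat \<Rightarrow> real" and b lam :: "nat \<Rightarrow> complex"
  assumes X: "valid_space X"
    and a_pos: "\<And>n. a n > 0" and a_decreasing: "\<And>m n. m < n \<Longrightarrow> a n < a m"
    and a_lim: "a \<longlonglongrightarrow> 0"
    and b_in: "inX X b" and b_nonzero: "\<And>n. b n \<noteq> 0"
    and lam_lim: "lam \<longlonglongrightarrow> 0" and Re_lam: "\<And>n. Re (lam n) \<le> 0"
    and kfac_prod: "\<And>n. convergent_prod (kfac a lam n)"
    and k_dual: "in_dualX X (kseq a b lam)"
begin

abbreviation \<alpha> :: "nat \<Rightarrow> complex" where "\<alpha> n \<equiv> complex_of_real (a n)"

abbreviation k :: "nat \<Rightarrow> complex" where "k \<equiv> kseq a b lam"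

definition kfun :: "(nat \<Rightarrow> complex) \<Rightarrow> complex" where
  "kfun x = (\<Sum>n. k n * x n)"

definition det_fun :: "complex \<Rightarrow> complex" where
  "det_fun \<mu> = 1 + kfun (\<lambda>n. b n / (\<alpha> n - \<mu>))"

lemma alpha_lim: "\<alpha> \<longlonglongrightarrow> 0"
  using tendsto_of_real[OF a_lim, where 'a=complex] by simp

lemma alpha_inj: "\<alpha> m = \<alpha> n \<Longrightarrow> m = n"
  using a_decreasing[of m n] a_decreasing[of n m] by (cases m n rule: linorder_cases) auto

lemma lam_neq_alpha: "lam m \<noteq> \<alpha> n"
  using Re_lam[of m] a_pos[of n] by auto

lemma a_le_norm_alpha_minus_lam: "a m \<le> norm (\<alpha> m - lam m)"
  using complex_Re_le_cmod[of "\<alpha> m - lam m"] Re_lam[of m] by simp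

lemma kfac_eq: "m \<noteq> n \<Longrightarrow> kfac a lam n m = (\<alpha> n - lam m) / (\<alpha> n - \<alpha> m)"
proof -
  assume mn: "m \<noteq> n"
  have an: "\<alpha> n \<noteq> 0" using a_pos[of n] by simp
  have "1 - lam m / \<alpha> n = (\<alpha> n - lam m) / \<alpha> n" "1 - \<alpha> m / \<alpha> n = (\<alpha> n - \<alpha> m) / \<alpha> n"
    using an by (simp_all add: field_simps)
  then show ?thesis unfolding kfac_def of_real_divide using mn an by simp
qed

lemma Re_kfac_ge_one:
  assumes "n \<le> m" shows "1 \<le> Re (kfac a lam n m)"
proof (cases "n = m")
  case False
  then have d: "a n - a m > 0" using a_decreasing assms by simp
  have "kfac a lam n m = 1 + (\<alpha> m - lam m) / complex_of_real (a n - a m)"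
    using False kfac_eq[of m n] d by (simp add: field_simps)
  moreover have "0 \<le> (a m - Re (lam m)) / (a n - a m)"
    using d a_pos[of m] Re_lam[of m] by simp
  ultimately show ?thesis by (simp add: Re_divide_of_real)
qed (simp add: kfac_def)

lemma kfac_nonzero: "kfac a lam n m \<noteq> 0"
proof (cases "m = n")
  case False
  then have "\<alpha> n - \<alpha> m \<noteq> 0" using alpha_inj by force
  moreover have "\<alpha> n - lam m \<noteq> 0" using lam_neq_alpha by (metis eq_iff_diff_eq_0)
  ultimately show ?thesis using False kfac_eq by simp
qed (simp add: kfac_def)

lemma k_nonzero: "k n \<noteq> 0"
  using prodinf_nonzero[OF kfac_prod kfac_nonzero] lam_neq_alpha[of n n] b_nonzero[of n]
  by (simp add: kseq_def)

lemma bounded_functionalX_kfun: "bounded_functionalX X kfun"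
  using bounded_functionalX_dual[OF k_dual] by (simp add: kfun_def[abs_def])

lemma kfun_lincomb:
  "inX X x \<Longrightarrow> inX X y \<Longrightarrow> kfun (\<lambda>n. p * x n + q * y n) = p * kfun x + q * kfun y"
proof -
  assume x: "inX X x" and y: "inX X y"
  have "kfun (\<lambda>n. p * x n + q * y n) = kfun (\<lambda>n. p * x n) + kfun (\<lambda>n. q * y n)"
    by (rule bounded_functionalXD(1)[OF bounded_functionalX_kfun inX_cmult[OF X x] inX_cmult[OF X y]])
  then show ?thesis
    using bounded_functionalXD(2)[OF bounded_functionalX_kfun x x] bounded_functionalXD(2)[OF bounded_functionalX_kfun y y]
    by simp
qed

lemma kfun_unit_vec: "kfun (unit_vec j) = k j"
  unfolding kfun_def by (subst suminf_finite[of "{j}"]) (auto simp: unit_vec_def)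

text \<open>Testing \<open>k\<close> against the truncations of \<open>(|b\<^sub>n| conj(k\<^sub>n) / |k\<^sub>n|)\<close>.\<close>
lemma summable_norm_kb: "summable (\<lambda>n. norm (k n * b n))"
proof -
  obtain K where K0: "K \<ge> 0" and K: "\<And>x. inX X x \<Longrightarrow> norm (kfun x) \<le> K * normX X x"
    using bounded_functionalX_bound[OF X bounded_functionalX_kfun] by blast
  have "(\<Sum>n<N. norm (k n * b n)) \<le> K * (4 * normX X b)" for N
  proof -
    define x where "x n = (if n < N then of_real (norm (b n)) * cnj (k n) / of_real (norm (k n)) else 0)" for n
    have x_in: "inX X x" by (rule inX_finite_support[OF X, of N]) (auto simp: x_def)
    have "k n * x n = (if n < N then of_real (norm (k n * b n)) else 0)" for n
    proof (cases "n < N")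
      case True
      have "k n * x n = of_real (norm (b n)) * (k n * cnj (k n)) / of_real (norm (k n))"
        using True by (simp add: x_def)
      also have "\<dots> = of_real (norm (b n)) * of_real (norm (k n))"
        using k_nonzero[of n] by (simp add: complex_norm_square[symmetric] power2_eq_square)
      finally show ?thesis using True by (simp add: norm_mult mult.commute)
    qed (simp add: x_def)
    then have "kfun x = of_real (\<Sum>n<N. norm (k n * b n))"
      unfolding kfun_def by (subst suminf_finite[of "{..<N}"]) auto
    then have "norm (kfun x) = (\<Sum>n<N. norm (k n * b n))"
      by (simp only: norm_of_real abs_of_nonneg sum_nonneg norm_ge_zero)
    then have "(\<Sum>n<N. norm (k n * b n)) \<le> K * normX X x"
      using K[OF x_in] by simp
    also have "normX X x \<le> 4 * (1 * normX X b + 0 * normX X b)"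
      by (rule normX_dominated[OF X b_in b_in x_in]) (auto simp: x_def norm_mult norm_divide k_nonzero)
    finally show ?thesis using K0 by (simp add: mult_left_mono)
  qed
  then show ?thesis by (intro summableI_nonneg_bounded) auto
qed

lemma residue_coeff_eq:
  "residue_coeff \<alpha> lam {..<N} n = (\<alpha> n - lam n) * (\<Prod>m<N. kfac a lam n m)"
proof -
  have "(\<Prod>m<N. kfac a lam n m) = (\<Prod>m\<in>{..<N}-{n}. kfac a lam n m)"
    by (rule prod.mono_neutral_right) (auto simp: kfac_def)
  also have "\<dots> = (\<Prod>m\<in>{..<N}-{n}. (\<alpha> n - lam m) / (\<alpha> n - \<alpha> m))"
    by (rule prod.cong) (auto simp: kfac_eq)
  finally show ?thesis by (simp add: residue_coeff_def)
qed

lemma residue_coeff_limit: "(\<lambda>N. residue_coeff \<alpha> lam {..<N} n) \<longlonglongrightarrow> - (k n * b n)"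
proof -
  have "(\<lambda>N. \<Prod>m<N. kfac a lam n m) \<longlonglongrightarrow> (\<Prod>m. kfac a lam n m)"
    using convergent_prod_LIMSEQ[OF kfac_prod[of n]]
      LIMSEQ_lessThan_iff_atMost[of "\<lambda>S. \<Prod>m\<in>S. kfac a lam n m"] by simp
  then have "(\<lambda>N. residue_coeff \<alpha> lam {..<N} n) \<longlonglongrightarrow> (\<alpha> n - lam n) * (\<Prod>m. kfac a lam n m)"
    unfolding residue_coeff_eq by (intro tendsto_mult tendsto_const)
  then show ?thesis using b_nonzero[of n] by (simp add: kseq_def)
qed

text \<open>The factors with \<open>m > n\<close> have modulus at least one, so the partial products grow in modulus.\<close>
lemma norm_residue_coeff_le:
  assumes "n < N"
  shows "norm (residue_coeff \<alpha> lam {..<N} n) \<le> norm (k n * b n)"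
proof -
  have mono: "norm (\<Prod>m<N. kfac a lam n m) \<le> norm (\<Prod>m<M. kfac a lam n m)" if "N \<le> M" for M
    using that
  proof (induction M rule: dec_induct)
    case (step M)
    have "1 \<le> norm (kfac a lam n M)"
      using Re_kfac_ge_one[of n M] step assms complex_Re_le_cmod order_trans by force
    then show ?case
      using step by (simp add: norm_mult mult_le_cancel_left1 order_trans)
  qed simp
  have "(\<lambda>M. norm (residue_coeff \<alpha> lam {..<M} n)) \<longlonglongrightarrow> norm (k n * b n)"
    using tendsto_norm[OF residue_coeff_limit] by simp
  then show ?thesis
    by (rule LIMSEQ_le_const) (auto simp: residue_coeff_eq norm_mult intro!: exI[of _ N] mult_left_mono mono)
qed

lemma inverse_alpha_minus_lim: "\<mu> \<noteq> 0 \<Longrightarrow> (\<lambda>n. 1 / (\<alpha> n - \<mu>)) \<longlonglongrightarrow> 1 / (0 - \<mu>)"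
  by (intro tendsto_intros alpha_lim) auto

text \<open>Dominated convergence (Tannery's theorem) applied to the partial fraction expansion of the
  finite products.\<close>
lemma ratio_prod_limit:
  assumes \<mu>0: "\<mu> \<noteq> 0" and \<mu>\<alpha>: "\<forall>n. \<mu> \<noteq> \<alpha> n"
  shows "(\<lambda>N. ratio_prod \<alpha> lam {..<N} \<mu>) \<longlonglongrightarrow> det_fun \<mu>"
proof -
  obtain B where B0: "0 \<le> B" and B: "\<And>n. norm (1 / (\<alpha> n - \<mu>)) \<le> B"
    using convergent_norm_bound[OF convergentI[OF inverse_alpha_minus_lim[OF \<mu>0]]] by blast
  define f where "f n N = (if n < N then residue_coeff \<alpha> lam {..<N} n / (\<mu> - \<alpha> n) else 0)" for n N
  have f_lim: "(\<lambda>N. f n N) \<longlonglongrightarrow> k n * (b n / (\<alpha> n - \<mu>))" for n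
  proof -
    have "(\<lambda>N. residue_coeff \<alpha> lam {..<N} n / (\<mu> - \<alpha> n)) \<longlonglongrightarrow> - (k n * b n) / (\<mu> - \<alpha> n)"
      using \<mu>\<alpha> by (intro tendsto_divide residue_coeff_limit tendsto_const) auto
    moreover have "eventually (\<lambda>N. residue_coeff \<alpha> lam {..<N} n / (\<mu> - \<alpha> n) = f n N) sequentially"
      unfolding f_def eventually_sequentially by (intro exI[of _ "Suc n"]) auto
    moreover have "- (k n * b n) / (\<mu> - \<alpha> n) = k n * (b n / (\<alpha> n - \<mu>))"
      by (simp add: divide_simps) (simp add: algebra_simps)
    ultimately show ?thesis using Lim_transform_eventually by metis
  qed
  have f_bound: "norm (f n N) \<le> norm (k n * b n) * B" for n N
  proof (cases "n < N")
    case True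
    then have "norm (f n N) = norm (residue_coeff \<alpha> lam {..<N} n) * norm (1 / (\<alpha> n - \<mu>))"
      by (simp add: f_def norm_divide norm_minus_commute)
    also have "\<dots> \<le> norm (k n * b n) * B"
      using norm_residue_coeff_le[OF True] B[of n] by (intro mult_mono) auto
    finally show ?thesis .
  qed (simp add: f_def B0)
  have "(\<lambda>N. \<Sum>n. f n N) \<longlonglongrightarrow> kfun (\<lambda>n. b n / (\<alpha> n - \<mu>))"
    using tannerys_theorem[of "\<lambda>n N. f n N", OF f_lim _ summable_mult2[OF summable_norm_kb, of B]]
    by (simp add: f_bound kfun_def always_eventually)
  moreover have "ratio_prod \<alpha> lam {..<N} \<mu> = 1 + (\<Sum>n. f n N)" for N
  proof -
    have "(\<Sum>n. f n N) = (\<Sum>n<N. residue_coeff \<alpha> lam {..<N} n / (\<mu> - \<alpha> n))"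
      by (subst suminf_finite[of "{..<N}"]) (auto simp: f_def)
    then show ?thesis
      using \<mu>\<alpha> by (simp add: partial_fraction_expansion inj_on_def alpha_inj)
  qed
  ultimately show ?thesis
    unfolding det_fun_def by (simp add: tendsto_add[OF tendsto_const])
qed

lemma det_fun_lam_eq_zero:
  assumes "lam j \<noteq> 0"
  shows "det_fun (lam j) = 0"
proof -
  have "eventually (\<lambda>N. ratio_prod \<alpha> lam {..<N} (lam j) = 0) sequentially"
    unfolding eventually_sequentially ratio_prod_def
    by (intro exI[of _ "Suc j"] allI impI prod_zero) (auto intro!: bexI[of _ j])
  then have "(\<lambda>N. ratio_prod \<alpha> lam {..<N} (lam j)) \<longlonglongrightarrow> 0"
    by (rule tendsto_eventually)
  with ratio_prod_limit show ?thesis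
    using assms lam_neq_alpha LIMSEQ_unique by metis
qed

lemma summable_kfac_zero:
  "summable (\<lambda>m. kfac a lam 0 m - 1)" "summable (\<lambda>m. norm (kfac a lam 0 m - 1) ^ 2)"
proof -
  have "convergent_prod (\<lambda>m. 1 + (kfac a lam 0 m - 1))"
    using kfac_prod[of 0] by simp
  moreover have "0 \<le> Re (kfac a lam 0 m - 1)" for m
    using Re_kfac_ge_one[of 0 m] by simp
  ultimately show "summable (\<lambda>m. kfac a lam 0 m - 1)" "summable (\<lambda>m. norm (kfac a lam 0 m - 1) ^ 2)"
    by (rule summable_if_convergent_prod, rule summable_norm_sq_if_convergent_prod)
qed

text \<open>With \<open>u\<^sub>m = kfac a lam 0 m - 1\<close> the factor \<open>(\<mu> - \<lambda>\<^sub>m)/(\<mu> - a\<^sub>m)\<close> is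
  \<open>1 + w\<^sub>m\<close> where \<open>w\<^sub>m = (a\<^sub>0/\<mu>) u\<^sub>m + O(|u\<^sub>m|\<^sup>2)\<close>, because \<open>a\<^sub>m \<le> |a\<^sub>m - \<lambda>\<^sub>m| \<le> a\<^sub>0 |u\<^sub>m|\<close>.\<close>
lemma convergent_prod_ratio:
  assumes \<mu>0: "\<mu> \<noteq> 0" and \<mu>\<alpha>: "\<forall>n. \<mu> \<noteq> \<alpha> n" and \<mu>_lam: "\<forall>n. \<mu> \<noteq> lam n"
  shows "convergent_prod (\<lambda>m. (\<mu> - lam m) / (\<mu> - \<alpha> m))"
proof -
  define u where "u m = kfac a lam 0 m - 1" for m
  define w where "w m = (\<alpha> m - lam m) / (\<mu> - \<alpha> m)" for m
  obtain B where B0: "0 \<le> B" and B: "\<And>n. norm (1 / (\<alpha> n - \<mu>)) \<le> B"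
    using convergent_norm_bound[OF convergentI[OF inverse_alpha_minus_lim[OF \<mu>0]]] by blast
  have B': "norm (1 / (\<mu> - \<alpha> m)) \<le> B" for m
    using B[of m] by (simp add: norm_divide norm_minus_commute)
  have w_eq: "w m = u m * ((\<alpha> 0 - \<alpha> m) / (\<mu> - \<alpha> m))" and a_le: "a m \<le> norm (u m) * a 0"
    if m: "0 < m" for m
  proof -
    have a0: "a m < a 0" using a_decreasing m by blast
    have u_eq: "u m = (\<alpha> m - lam m) / (\<alpha> 0 - \<alpha> m)"
      using kfac_eq[of m 0] m a0 by (simp add: u_def field_simps)
    then show "w m = u m * ((\<alpha> 0 - \<alpha> m) / (\<mu> - \<alpha> m))"
      using a0 by (simp add: w_def)
    have "a m \<le> norm (\<alpha> m - lam m)" by (rule a_le_norm_alpha_minus_lam)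
    also have "\<dots> = norm (u m) * (a 0 - a m)"
      using a0 unfolding u_eq by (simp add: norm_divide flip: of_real_diff)
    also have "\<dots> \<le> norm (u m) * a 0" using a_pos[of m] by (intro mult_left_mono) auto
    finally show "a m \<le> norm (u m) * a 0" .
  qed
  have w_le: "norm (w m) \<le> (a 0 * B) * norm (u m)" if m: "0 < m" for m
  proof -
    have "norm ((\<alpha> 0 - \<alpha> m) / (\<mu> - \<alpha> m)) = (a 0 - a m) * norm (1 / (\<mu> - \<alpha> m))"
      using a_decreasing[OF m] by (simp add: norm_divide flip: of_real_diff)
    also have "\<dots> \<le> a 0 * B"
      using a_pos[of m] a_pos[of 0] B'[of m] B0 by (intro mult_mono) auto
    finally have "norm ((\<alpha> 0 - \<alpha> m) / (\<mu> - \<alpha> m)) \<le> a 0 * B" .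
    then show ?thesis
      unfolding w_eq[OF m] norm_mult by (simp add: mult_left_mono mult.commute)
  qed
  have w_approx: "norm (w m - (\<alpha> 0 / \<mu>) * u m) \<le> (a 0 * norm (\<alpha> 0 - \<mu>) * B / norm \<mu>) * norm (u m) ^ 2"
    if m: "0 < m" for m
  proof -
    have "w m - (\<alpha> 0 / \<mu>) * u m = u m * \<alpha> m * ((\<alpha> 0 - \<mu>) / \<mu>) * (1 / (\<mu> - \<alpha> m))"
      unfolding w_eq[OF m] using \<mu>0 \<mu>\<alpha> by (simp add: field_simps)
    then have "norm (w m - (\<alpha> 0 / \<mu>) * u m)
        = norm (u m) * a m * (norm (\<alpha> 0 - \<mu>) / norm \<mu>) * norm (1 / (\<mu> - \<alpha> m))"
      using a_pos[of m] by (simp add: norm_mult norm_divide)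
    also have "\<dots> \<le> norm (u m) * (norm (u m) * a 0) * (norm (\<alpha> 0 - \<mu>) / norm \<mu>) * B"
      using a_le[OF m] B'[of m] a_pos[of m] a_pos[of 0] by (intro mult_mono mult_left_mono) auto
    finally show ?thesis by (simp add: power2_eq_square mult_ac)
  qed
  have ratio: "(\<mu> - lam m) / (\<mu> - \<alpha> m) = 1 + w m" for m
    using \<mu>\<alpha> by (simp add: w_def field_simps)
  have pos: "eventually (\<lambda>m. 0 < m) sequentially" by (simp add: eventually_gt_at_top)
  have "summable (\<lambda>m. norm (w m - (\<alpha> 0 / \<mu>) * u m))"
  proof (rule summable_comparison_test_ev[OF eventually_mono[OF pos]])
    show "summable (\<lambda>m. (a 0 * norm (\<alpha> 0 - \<mu>) * B / norm \<mu>) * norm (u m) ^ 2)"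
      using summable_kfac_zero(2) by (intro summable_mult) (simp add: u_def)
    show "norm (norm (w m - (\<alpha> 0 / \<mu>) * u m))
        \<le> (a 0 * norm (\<alpha> 0 - \<mu>) * B / norm \<mu>) * norm (u m) ^ 2" if "0 < m" for m
      using w_approx[OF that] by simp
  qed
  then have "summable (\<lambda>m. (\<alpha> 0 / \<mu>) * u m + (w m - (\<alpha> 0 / \<mu>) * u m))"
    using summable_kfac_zero(1) summable_norm_cancel unfolding u_def[symmetric]
    by (intro summable_add summable_mult) auto
  then have "summable w" by simp
  moreover have "summable (\<lambda>m. norm (w m) ^ 2)"
  proof (rule summable_comparison_test_ev[OF eventually_mono[OF pos]])
    show "summable (\<lambda>m. (a 0 * B) ^ 2 * norm (u m) ^ 2)"
      using summable_kfac_zero(2) by (simp add: u_def)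
    show "norm (norm (w m) ^ 2) \<le> (a 0 * B) ^ 2 * norm (u m) ^ 2" if "0 < m" for m
      using power_mono[OF w_le[OF that], of 2] by (simp add: power_mult_distrib)
  qed
  moreover have "1 + w m \<noteq> 0" for m
    using \<mu>\<alpha> \<mu>_lam unfolding ratio[symmetric] by simp
  ultimately have "convergent_prod (\<lambda>m. 1 + w m)"
    by (rule convergent_prod_one_plus)
  then show ?thesis unfolding ratio .
qed

lemma det_fun_nonzero:
  assumes "\<mu> \<noteq> 0" "\<forall>n. \<mu> \<noteq> \<alpha> n" "\<forall>n. \<mu> \<noteq> lam n"
  shows "det_fun \<mu> \<noteq> 0"
proof -
  let ?g = "\<lambda>m. (\<mu> - lam m) / (\<mu> - \<alpha> m)"
  have g: "convergent_prod ?g" by (rule convergent_prod_ratio[OF assms])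
  have "(\<lambda>N. ratio_prod \<alpha> lam {..<N} \<mu>) \<longlonglongrightarrow> prodinf ?g"
    using convergent_prod_LIMSEQ[OF g] LIMSEQ_lessThan_iff_atMost[of "\<lambda>S. \<Prod>m\<in>S. ?g m"]
    by (simp add: ratio_prod_def)
  then have "det_fun \<mu> = prodinf ?g"
    using ratio_prod_limit[OF assms(1,2)] LIMSEQ_unique by blast
  moreover have "prodinf ?g \<noteq> 0"
    using assms by (intro prodinf_nonzero[OF g]) auto
  ultimately show ?thesis by simp
qed

lemma Top_eq: "Top a b k x = (\<lambda>n. \<alpha> n * x n + kfun x * b n)"
  by (simp add: Top_def kfun_def)

text \<open>An inverse \<open>S\<close> of \<open>T\<close> would give \<open>e\<^sub>N - k\<^sub>N S b = a\<^sub>N S e\<^sub>N \<rightarrow> 0\<close>, which is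
  impossible: evaluated at \<open>N\<close> the left side stays near \<open>1\<close>, because \<open>k\<^sub>N \<rightarrow> 0\<close> unless \<open>S b = 0\<close>.\<close>
lemma zero_in_spectrum: "0 \<in> spectrumX X (Top a b k)"
proof (rule ccontr)
  assume "0 \<notin> spectrumX X (Top a b k)"
  then obtain S where S: "bounded_opX X S"
    and inv: "\<And>x. inX X x \<Longrightarrow> S (\<lambda>n. Top a b k x n - 0 * x n) = x"
    unfolding spectrumX_def by blast
  obtain K where K0: "0 \<le> K" and K: "\<And>x. inX X x \<Longrightarrow> normX X (S x) \<le> K * normX X x"
    using bounded_opX_bound[OF X S] by blast
  define z where "z = S b"
  have z_in: "inX X z" unfolding z_def by (rule bounded_opXD(1)[OF S b_in b_in])
  have key: "norm (unit_vec N m - k N * z m) \<le> a N * K" for N m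
  proof -
    have e: "inX X (unit_vec N)" by (rule inX_unit_vec[OF X])
    have "(\<lambda>n. Top a b k (unit_vec N) n - 0 * unit_vec N n) = (\<lambda>n. \<alpha> N * unit_vec N n + k N * b n)"
      unfolding Top_eq kfun_unit_vec by (auto simp: unit_vec_def)
    then have "unit_vec N = S (\<lambda>n. \<alpha> N * unit_vec N n + k N * b n)"
      using inv[OF e] by simp
    also have "\<dots> = (\<lambda>n. \<alpha> N * S (unit_vec N) n + k N * z n)"
      unfolding z_def using e b_in
      by (simp add: bounded_opXD[OF S] inX_cmult[OF X])
    finally have "unit_vec N m - k N * z m = \<alpha> N * S (unit_vec N) m"
      by (metis add_diff_cancel_right')
    then have "norm (unit_vec N m - k N * z m) = a N * norm (S (unit_vec N) m)"
      using a_pos[of N] by (simp add: norm_mult)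
    also have "\<dots> \<le> a N * (K * normX X (unit_vec N))"
      using a_pos[of N] norm_le_normX[OF X bounded_opXD(1)[OF S e e], of m] K[OF e]
      by (intro mult_left_mono) auto
    also have "\<dots> \<le> a N * K"
      using mult_left_le[OF normX_unit_vec_le[OF X, of N] K0] a_pos[of N]
      by (intro mult_left_mono) auto
    finally show ?thesis .
  qed
  obtain m0 C where C: "\<And>N. N \<noteq> m0 \<Longrightarrow> 1 \<le> a N * C"
  proof (cases "\<exists>m. z m \<noteq> 0")
    case True
    then obtain m0 where m0: "z m0 \<noteq> 0" by auto
    have "1 \<le> a N * (K + K * normX X z / norm (z m0))" if "N \<noteq> m0" for N
    proof -
      have "norm (k N) * norm (z m0) \<le> a N * K"
        using key[of N m0] that by (simp add: unit_vec_def norm_mult)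
      then have kN: "norm (k N) \<le> a N * K / norm (z m0)"
        using m0 by (simp add: field_simps)
      have "1 \<le> norm (unit_vec N N - k N * z N) + norm (k N * z N)"
        using norm_triangle_ineq[of "unit_vec N N - k N * z N" "k N * z N"] by (simp add: unit_vec_def)
      also have "norm (k N * z N) \<le> (a N * K / norm (z m0)) * normX X z"
        unfolding norm_mult using kN norm_le_normX[OF X z_in] K0 a_pos[of N]
        by (intro mult_mono) auto
      finally show ?thesis
        using key[of N N] by (simp add: algebra_simps)
    qed
    then show ?thesis using that by blast
  next
    case False
    then have "1 \<le> a N * K" for N using key[of N N] by (simp add: unit_vec_def)
    then show ?thesis using that by blast
  qed
  have "(\<lambda>N. a N * C) \<longlonglongrightarrow> 0 * C" by (intro tendsto_mult a_lim tendsto_const)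
  then have "eventually (\<lambda>N. a N * C < 1) sequentially" by (simp add: order_tendstoD(2))
  then obtain N0 where N0: "\<And>N. N \<ge> N0 \<Longrightarrow> a N * C < 1"
    unfolding eventually_sequentially by blast
  have "max N0 (Suc m0) \<noteq> m0" "max N0 (Suc m0) \<ge> N0" by auto
  then show False
    using N0 C by (meson not_le)
qed

lemma lam_in_spectrum:
  assumes "lam j \<noteq> 0"
  shows "lam j \<in> spectrumX X (Top a b k)"
proof -
  define x where "x n = 1 / (\<alpha> n - lam j) * b n" for n
  have ne: "\<alpha> n - lam j \<noteq> 0" for n using lam_neq_alpha[of j n] by auto
  have x_in: "inX X x"
    unfolding x_def using inverse_alpha_minus_lim[OF assms]
    by (intro inX_mult_convergent[OF X _ b_in]) (rule convergentI)
  have "kfun x = det_fun (lam j) - 1"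
    by (simp add: det_fun_def x_def[abs_def])
  then have "kfun x = -1"
    using det_fun_lam_eq_zero[OF assms] by simp
  then have "(\<lambda>n. Top a b k x n - lam j * x n) = (\<lambda>_. 0)"
    unfolding Top_eq using ne by (auto simp: x_def field_simps)
  moreover have "x 0 \<noteq> 0"
    using b_nonzero[of 0] ne[of 0] by (simp add: x_def)
  ultimately show ?thesis
    using in_spectrumX_if_eigenvector[OF x_in] by blast
qed

text \<open>Sherman--Morrison: \<open>(T - \<mu>)\<^sup>-\<^sup>1 y = D y - (k(D y) / det_fun \<mu>) D b\<close> with \<open>D = (A - \<mu>)\<^sup>-\<^sup>1\<close>.\<close>
lemma not_in_spectrum_if_det_fun_nonzero:
  assumes \<mu>0: "\<mu> \<noteq> 0" and \<mu>\<alpha>: "\<forall>n. \<mu> \<noteq> \<alpha> n" and det: "det_fun \<mu> \<noteq> 0"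
  shows "\<mu> \<notin> spectrumX X (Top a b k)"
proof -
  define d where "d n = 1 / (\<alpha> n - \<mu>)" for n
  have ne: "\<alpha> n - \<mu> \<noteq> 0" for n using \<mu>\<alpha> by auto
  have dc: "convergent d"
    unfolding d_def[abs_def] using inverse_alpha_minus_lim[OF \<mu>0] by (rule convergentI)
  define db where "db n = d n * b n" for n
  have db_in: "inX X db" unfolding db_def[abs_def] by (rule inX_mult_convergent[OF X dc b_in])
  have det_eq: "det_fun \<mu> = 1 + kfun db"
    by (simp add: det_fun_def db_def[abs_def] d_def)
  define \<phi> where "\<phi> y = (- 1 / det_fun \<mu>) * kfun (\<lambda>n. d n * y n)" for y
  define S where "S y = (\<lambda>n. d n * y n + \<phi> y * db n)" for y
  have "bounded_functionalX X \<phi>"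
    unfolding \<phi>_def[abs_def]
    by (intro bounded_functionalX_cmult[OF X] bounded_functionalX_mult_convergent[OF X dc]
        bounded_functionalX_kfun)
  then have S: "bounded_opX X S"
    unfolding S_def[abs_def]
    by (intro bounded_opX_add[OF X] bounded_opX_diagonal[OF X dc] bounded_opX_rank_one[OF X _ db_in])
  have left_inverse: "S (\<lambda>n. Top a b k x n - \<mu> * x n) = x" if x: "inX X x" for x
  proof -
    define y where "y n = Top a b k x n - \<mu> * x n" for n
    have dy: "(\<lambda>n. d n * y n) = (\<lambda>n. 1 * x n + kfun x * db n)"
      using ne by (auto simp: y_def Top_eq d_def db_def field_simps)
    have "\<phi> y = - kfun x"
      using det unfolding \<phi>_def dy kfun_lincomb[OF x db_in] det_eq by (simp add: field_simps)
    then have "S y = x" using fun_cong[OF dy] by (simp add: S_def fun_eq_iff)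
    then show ?thesis by (simp add: y_def[abs_def])
  qed
  have right_inverse: "(\<lambda>n. Top a b k (S y) n - \<mu> * S y n) = y" if y: "inX X y" for y
  proof -
    have dy_in: "inX X (\<lambda>n. d n * y n)" by (rule inX_mult_convergent[OF X dc y])
    have "kfun (S y) = kfun (\<lambda>n. 1 * (d n * y n) + \<phi> y * db n)" by (simp add: S_def)
    also have "\<dots> = - \<phi> y"
      using det unfolding kfun_lincomb[OF dy_in db_in] \<phi>_def det_eq by (simp add: field_simps)
    finally have kS: "kfun (S y) = - \<phi> y" .
    show ?thesis
    proof
      fix n
      have "Top a b k (S y) n - \<mu> * S y n = (\<alpha> n - \<mu>) * S y n + kfun (S y) * b n"
        by (simp add: Top_eq algebra_simps)
      also have "(\<alpha> n - \<mu>) * S y n = ((\<alpha> n - \<mu>) * d n) * (y n + \<phi> y * b n)"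
        by (simp add: S_def db_def algebra_simps)
      also have "(\<alpha> n - \<mu>) * d n = 1"
        using ne[of n] by (simp add: d_def)
      finally show "Top a b k (S y) n - \<mu> * S y n = y n"
        by (simp add: kS)
    qed
  qed
  show ?thesis
    unfolding spectrumX_def using S left_inverse right_inverse by blast
qed

text \<open>At \<open>\<mu> = a\<^sub>j\<close> the \<open>j\<close>-th coordinate of \<open>(T - \<mu>) x\<close> is \<open>k(x) b\<^sub>j\<close>, which determines
  \<open>k(x)\<close>; the remaining coordinates then determine \<open>x\<^sub>n\<close> for \<open>n \<noteq> j\<close>, and finally
  \<open>x\<^sub>j\<close> is recovered from \<open>k(x)\<close> since \<open>k\<^sub>j \<noteq> 0\<close>.\<close>
lemma alpha_not_in_spectrum: "\<alpha> j \<notin> spectrumX X (Top a b k)"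
proof -
  define d where "d n = (if n = j then 0 else 1 / (\<alpha> n - \<alpha> j))" for n
  have ne: "n \<noteq> j \<Longrightarrow> \<alpha> n - \<alpha> j \<noteq> 0" for n using alpha_inj by force
  have dc: "convergent d"
  proof (rule convergentI, rule Lim_transform_eventually)
    show "(\<lambda>n. 1 / (\<alpha> n - \<alpha> j)) \<longlonglongrightarrow> 1 / (0 - \<alpha> j)"
      using a_pos[of j] by (intro inverse_alpha_minus_lim) simp
    show "eventually (\<lambda>n. 1 / (\<alpha> n - \<alpha> j) = d n) sequentially"
      unfolding eventually_sequentially d_def by (intro exI[of _ "Suc j"]) auto
  qed
  define db where "db n = d n * b n" for n
  have db_in: "inX X db" unfolding db_def[abs_def] by (rule inX_mult_convergent[OF X dc b_in])
  have e_in: "inX X (unit_vec j)" by (rule inX_unit_vec[OF X])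
  define r where
    "r y = ((1 + kfun db) / (b j * k j)) * y j + (- 1 / k j) * kfun (\<lambda>n. d n * y n)" for y
  define S where "S y = (\<lambda>n. d n * y n + ((- 1 / b j) * y j) * db n + r y * unit_vec j n)" for y
  have "bounded_functionalX X r"
    unfolding r_def[abs_def]
    by (intro bounded_functionalX_add[OF X] bounded_functionalX_cmult[OF X]
        bounded_functionalX_coordinate[OF X] bounded_functionalX_mult_convergent[OF X dc]
        bounded_functionalX_kfun)
  then have S: "bounded_opX X S"
    unfolding S_def[abs_def]
    by (intro bounded_opX_add[OF X] bounded_opX_diagonal[OF X dc] bounded_opX_rank_one[OF X _ db_in]
        bounded_opX_rank_one[OF X _ e_in] bounded_functionalX_cmult[OF X]
        bounded_functionalX_coordinate[OF X])
  have left_inverse: "S (\<lambda>n. Top a b k x n - \<alpha> j * x n) = x" if x: "inX X x" for x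
  proof -
    define y where "y n = Top a b k x n - \<alpha> j * x n" for n
    have y_j: "y j = kfun x * b j" by (simp add: y_def Top_eq)
    have dy: "(\<lambda>n. d n * y n) = (\<lambda>n. 1 * (1 * x n + (- x j) * unit_vec j n) + kfun x * db n)"
      using ne by (auto simp: y_def Top_eq d_def db_def unit_vec_def field_simps)
    have xe_in: "inX X (\<lambda>n. 1 * x n + (- x j) * unit_vec j n)"
      by (intro inX_add[OF X] inX_cmult[OF X] x e_in)
    have kdy: "kfun (\<lambda>n. d n * y n) = kfun x - x j * k j + kfun x * kfun db"
      unfolding dy kfun_lincomb[OF xe_in db_in] kfun_lincomb[OF x e_in] kfun_unit_vec by simp
    have "r y = x j"
      unfolding r_def y_j kdy using k_nonzero[of j] b_nonzero[of j] by (simp add: field_simps)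
    then have "S y = x"
      using fun_cong[OF dy] b_nonzero[of j] by (auto simp: S_def y_j unit_vec_def algebra_simps)
    then show ?thesis by (simp add: y_def[abs_def])
  qed
  have right_inverse: "(\<lambda>n. Top a b k (S y) n - \<alpha> j * S y n) = y" if y: "inX X y" for y
  proof -
    have dy_in: "inX X (\<lambda>n. d n * y n)" by (rule inX_mult_convergent[OF X dc y])
    have i1: "inX X (\<lambda>n. 1 * (d n * y n) + ((- 1 / b j) * y j) * db n)"
      by (intro inX_add[OF X] inX_cmult[OF X] dy_in db_in)
    have "kfun (S y) = kfun (\<lambda>n. 1 * (1 * (d n * y n) + ((- 1 / b j) * y j) * db n) + r y * unit_vec j n)"
      by (simp add: S_def)
    also have "\<dots> = y j / b j"
      unfolding kfun_lincomb[OF i1 e_in] kfun_lincomb[OF dy_in db_in] kfun_unit_vec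
      using k_nonzero[of j] b_nonzero[of j] by (simp add: r_def field_simps)
    finally have kS: "kfun (S y) = y j / b j" .
    show ?thesis
    proof
      fix n
      have "Top a b k (S y) n - \<alpha> j * S y n = (\<alpha> n - \<alpha> j) * S y n + kfun (S y) * b n"
        by (simp add: Top_eq algebra_simps)
      also have "\<dots> = y n"
      proof (cases "n = j")
        case True
        then show ?thesis using b_nonzero[of j] by (simp add: kS)
      next
        case False
        have "(\<alpha> n - \<alpha> j) * S y n = ((\<alpha> n - \<alpha> j) * d n) * (y n - y j / b j * b n)"
          using False by (simp add: S_def db_def unit_vec_def algebra_simps diff_divide_distrib)
        also have "(\<alpha> n - \<alpha> j) * d n = 1"
          using ne[OF False] False by (simp add: d_def)
        finally show ?thesis by (simp add: kS)
      qed
      finally show "Top a b k (S y) n - \<alpha> j * S y n = y n" .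
    qed
  qed
  show ?thesis
    unfolding spectrumX_def using S left_inverse right_inverse by blast
qed

lemma spectrum_eq: "spectrumX X (Top a b k) = insert 0 (range lam)"
proof
  show "insert 0 (range lam) \<subseteq> spectrumX X (Top a b k)"
    using zero_in_spectrum lam_in_spectrum by (metis image_subset_iff insert_subset)
  show "spectrumX X (Top a b k) \<subseteq> insert 0 (range lam)"
  proof
    fix \<mu> assume \<mu>: "\<mu> \<in> spectrumX X (Top a b k)"
    show "\<mu> \<in> insert 0 (range lam)"
    proof (rule ccontr)
      assume "\<mu> \<notin> insert 0 (range lam)"
      then have \<mu>0: "\<mu> \<noteq> 0" and \<mu>_lam: "\<forall>n. \<mu> \<noteq> lam n" by auto
      show False
      proof (cases "\<exists>j. \<mu> = \<alpha> j")
        case True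
        then show False using alpha_not_in_spectrum \<mu> by blast
      next
        case False
        then show False
          using not_in_spectrum_if_det_fun_nonzero[OF \<mu>0 _ det_fun_nonzero[OF \<mu>0 _ \<mu>_lam]] \<mu> by blast
      qed
    qed
  qed
qed

end

theorem theorem2:
  fixes X :: seqspace and a :: "nat \<Rightarrow> real" and b lam :: "nat \<Rightarrow> complex"
  assumes "valid_space X"
    and "\<And>n. a n > 0" and "\<And>m n. m < n \<Longrightarrow> a n < a m" and "a \<longlonglongrightarrow> 0"
    and "inX X b" and "\<And>n. b n \<noteq> 0"
    and "lam \<longlonglongrightarrow> 0" and "\<And>n. Re (lam n) \<le> 0"
    and "\<And>n. convergent_prod (kfac a lam n)"
    and "in_dualX X (kseq a b lam)"
  shows "spectrumX X (Top a b (kseq a b lam)) = insert 0 (range lam)"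
proof -
  interpret rank_one_perturbation X a b lam
    by (rule rank_one_perturbation.intro) (fact assms)+
  show ?thesis by (rule spectrum_eq)
qed

end
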